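(* Let $(Z',d)$ be a metric space and $\gamma:S^1\to Z'$ an injective Lipschitz curve. Then there is a Lipschitz map $\pi=(\pi_1,\pi_2):Z'\to\mathbb{R}^2$ such that $A(\pi\circ\gamma)\neq 0$.
   Context: $S^1$ is identified with $[0,2\pi]$ with endpoints glued. For a Lipschitz closed curve $\eta=(\eta_1,\eta_2):S^1\to\mathbb{R}^2$, its signed area is $A(\eta)=\int_{S^1}\eta_1(t)\eta_2'(t)\,dt$. *)

theory Defs
  imports "HOL-Analysis.Analysis"
begin

text \<open>Closed curves on S^1 are represented as functions on real, parametrised by
  the interval [0, 2 pi] with the endpoints glued (eta 0 = eta (2 pi)).
  For a Lipschitz curve the derivative exists almost everywhere, so the
  value of deriv on the exceptional null set does not affect the integral.\<close>

definition signed_area :: "(real \<Rightarrow> real \<times> real) \<Rightarrow> real" where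
  "signed_area \<eta> = integral {0..2*pi} (\<lambda>t. fst (\<eta> t) * deriv (\<lambda>s. snd (\<eta> s)) t)"

end

theory Submission
  imports Defs
begin

text \<open>
  Cut the circle into the quarter arcs over [0, pi/2], [pi/2, pi], [pi, 3pi/2], [3pi/2, 2pi].
  By injectivity opposite arcs are disjoint compact sets, so truncated distance functions give
  1-Lipschitz maps pi1, pi2 with pi1 = d1 > 0 on the first arc and 0 on the third, pi2 = d2 > 0 on the
  second arc and 0 on the fourth. Along the curve pi2 is constant on the second and fourth quarters,
  pi1 vanishes on the third and pi2 (gamma 0) = pi2 (gamma 2pi) = 0, so the signed area reduces to
  d1 times the integral of (pi2 o gamma)' over the first quarter, which is d1 d2 > 0.

  That last step is the fundamental theorem of calculus for Lipschitz functions, and it needs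
  Lebesgue's theorem that a Lipschitz function of one variable is differentiable almost everywhere.
  Adding a multiple of x reduces this to a monotone Lipschitz F. Consider the points x at which the
  slopes of F on one side of x are frequently below r and those on the other side frequently above
  s > r. Vitali coverings bound the Lebesgue--Stieltjes measure of F on this set above by r times and
  below by s times its Lebesgue measure, so the set is null. Outside these null sets for rational
  r < s, the upper limit of the quotients on each side is at most the lower limit on the other side,
  so both one-sided limits exist and agree.
\<close>

section \<open>Slopes and Vitali covers by intervals\<close>

definition slope :: "(real \<Rightarrow> real) \<Rightarrow> real \<Rightarrow> real \<Rightarrow> real" where
  "slope F a b = (F b - F a) / (b - a)"

lemma slope_commute: "slope F a b = slope F b a"
  unfolding slope_def by (metis minus_diff_eq minus_divide_divide)

lemma slope_le_iff: "a < b \<Longrightarrow> slope F a b \<le> r \<longleftrightarrow> F b - F a \<le> r * (b - a)"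
  by (simp add: slope_def pos_divide_le_eq)

lemma le_slope_iff: "a < b \<Longrightarrow> r \<le> slope F a b \<longleftrightarrow> r * (b - a) \<le> F b - F a"
  by (simp add: slope_def pos_le_divide_eq)

definition vitali_interval_cover :: "(real \<Rightarrow> real \<Rightarrow> bool) \<Rightarrow> real set \<Rightarrow> bool" where
  "vitali_interval_cover P E \<longleftrightarrow>
     (\<forall>x\<in>E. \<forall>d>0. \<exists>a b. a \<le> x \<and> x \<le> b \<and> a < b \<and> b - a < d \<and> P a b)"

lemma vitali_interval_cover_subset:
  "vitali_interval_cover P E \<Longrightarrow> A \<subseteq> E \<Longrightarrow> vitali_interval_cover P A"
  unfolding vitali_interval_cover_def by blast

lemma vitali_interval_cover_slope:
  assumes "\<And>x. x \<in> E \<Longrightarrow> frequently (\<lambda>h. P (slope F x (x + h))) (at 0 within S)"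
  shows "vitali_interval_cover (\<lambda>a b. P (slope F a b)) E"
  unfolding vitali_interval_cover_def
proof (intro ballI allI impI)
  fix x d :: real assume "x \<in> E" "0 < d"
  then obtain h where h: "h \<noteq> 0" "\<bar>h\<bar> < d" "P (slope F x (x + h))"
    using assms by (auto simp: frequently_at dist_real_def)
  show "\<exists>a b. a \<le> x \<and> x \<le> b \<and> a < b \<and> b - a < d \<and> P (slope F a b)"
  proof (cases "0 < h")
    case True
    then show ?thesis using h by (intro exI[of _ x] exI[of _ "x + h"]) auto
  next
    case False
    then show ?thesis using h by (intro exI[of _ "x + h"] exI[of _ x]) (auto simp: slope_commute)
  qed
qed

lemma vitali_interval_cover_disjoint_subfamily:
  assumes cover: "vitali_interval_cover P E" and U: "open U" "E \<subseteq> U"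
  obtains C where "countable C"
    "\<And>p. p \<in> C \<Longrightarrow> fst p < snd p \<and> {fst p..snd p} \<subseteq> U \<and> P (fst p) (snd p)"
    "disjoint_family_on (\<lambda>p. {fst p..snd p}) C"
    "negligible (E - (\<Union>p\<in>C. {fst p..snd p}))"
proof -
  define K where "K = {p. fst p < snd p \<and> {fst p..snd p} \<subseteq> U \<and> P (fst p) (snd p)}"
  define c where "c p = (fst p + snd p) / 2" for p :: "real \<times> real"
  define \<rho> where "\<rho> p = (snd p - fst p) / 2" for p :: "real \<times> real"
  have cball_eq: "cball (c p) (\<rho> p) = {fst p..snd p}" for p
    by (simp add: cball_eq_atLeastAtMost c_def \<rho>_def field_simps)
  have fine: "\<exists>p. p \<in> K \<and> x \<in> cball (c p) (\<rho> p) \<and> \<rho> p < d" if x: "x \<in> E" and d: "0 < d" for x d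
  proof -
    obtain \<delta> where \<delta>: "\<delta> > 0" "ball x \<delta> \<subseteq> U" using U x open_contains_ball by blast
    obtain a b where ab: "a \<le> x" "x \<le> b" "a < b" "b - a < min d \<delta>" "P a b"
      using cover x d \<delta>(1) unfolding vitali_interval_cover_def by (metis min_less_iff_conj)
    have "{a..b} \<subseteq> ball x \<delta>" using ab by (auto simp: dist_real_def)
    then have "(a, b) \<in> K" using ab \<delta>(2) by (auto simp: K_def)
    moreover have "x \<in> cball (c (a, b)) (\<rho> (a, b))" using ab by (simp add: cball_eq)
    moreover have "\<rho> (a, b) < d" using ab by (simp add: \<rho>_def)
    ultimately show ?thesis by blast
  qed
  have "\<And>p. p \<in> K \<Longrightarrow> 0 < \<rho> p" by (auto simp: K_def \<rho>_def)
  then obtain C where C: "countable C" "C \<subseteq> K"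
     "pairwise (\<lambda>p q. disjnt (cball (c p) (\<rho> p)) (cball (c q) (\<rho> q))) C"
     "negligible (E - (\<Union>p\<in>C. cball (c p) (\<rho> p)))"
    using Vitali_covering_theorem_cballs[of K \<rho> E c] fine by blast
  show ?thesis
  proof (rule that[OF C(1)])
    show "\<And>p. p \<in> C \<Longrightarrow> fst p < snd p \<and> {fst p..snd p} \<subseteq> U \<and> P (fst p) (snd p)"
      using C(2) by (auto simp: K_def)
    show "disjoint_family_on (\<lambda>p. {fst p..snd p}) C"
      using C(3) by (auto simp: disjoint_family_on_def pairwise_def disjnt_def cball_eq)
    show "negligible (E - (\<Union>p\<in>C. {fst p..snd p}))" using C(4) by (simp add: cball_eq)
  qed
qed

section \<open>Monotone Lipschitz functions are differentiable almost everywhere\<close>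

lemma lborel_outer_open:
  assumes E: "E \<in> sets borel" and d: "0 < d"
  obtains U where "open U" "E \<subseteq> U" "emeasure lborel (U - E) < ennreal d"
proof -
  obtain U where U: "open U" "E \<subseteq> U" "emeasure lebesgue (U - E) < ennreal d"
    using sets_lebesgue_outer_open[of E d] E d by auto
  have "U - E \<in> sets borel" using U(1) E by auto
  then have "emeasure lebesgue (U - E) = emeasure lborel (U - E)" by (simp add: emeasure_completion)
  then show ?thesis using U(3) by (intro that[OF U(1,2)]) simp
qed

lemma emeasure_lborel_negligible:
  assumes "A \<in> sets borel" "negligible A"
  shows "emeasure lborel A = 0"
  using assms by (simp add: negligible_iff_emeasure0 emeasure_completion)

lemma emeasure_eq_plus_Diff:
  "A \<in> sets M \<Longrightarrow> B \<in> sets M \<Longrightarrow> A \<subseteq> B \<Longrightarrow> emeasure M B = emeasure M A + emeasure M (B - A)"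
  using emeasure_Un[of A M B] by (simp add: Un_absorb1)

lemma ennreal_mult_divide_add_one_le:
  fixes c e :: real
  assumes "0 \<le> c" "0 < e"
  shows "ennreal c * ennreal (e / (c + 1)) \<le> ennreal e"
proof -
  have "c * (e / (c + 1)) \<le> e" using assms by (simp add: field_simps)
  then show ?thesis using assms by (simp add: ennreal_mult[symmetric] ennreal_leI)
qed

lemma emeasure_interval_measure_Union_Icc:
  fixes F :: "real \<Rightarrow> real"
  assumes F: "mono F" "continuous_on UNIV F"
    and C: "countable C" "disjoint_family_on (\<lambda>p. {fst p..snd p}) C" "\<And>p. p \<in> C \<Longrightarrow> fst p \<le> snd p"
  shows "emeasure (interval_measure F) (\<Union>p\<in>C. {fst p..snd p}) =
    (\<integral>\<^sup>+p. ennreal (F (snd p) - F (fst p)) \<partial>count_space C)"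
proof -
  have "emeasure (interval_measure F) (\<Union>p\<in>C. {fst p..snd p}) =
      (\<integral>\<^sup>+p. emeasure (interval_measure F) {fst p..snd p} \<partial>count_space C)"
    by (rule emeasure_UN_countable[OF _ C(1,2)]) simp
  also have "\<dots> = (\<integral>\<^sup>+p. ennreal (F (snd p) - F (fst p)) \<partial>count_space C)"
    using C(3) F by (intro nn_integral_cong emeasure_interval_measure_Icc) (auto dest: monoD)
  finally show ?thesis .
qed

lemma emeasure_lborel_Union_Icc:
  assumes "countable C" "disjoint_family_on (\<lambda>p. {fst p..snd p}) C" "\<And>p. p \<in> C \<Longrightarrow> fst p \<le> snd p"
  shows "emeasure lborel (\<Union>p\<in>C. {fst p..snd p}) = (\<integral>\<^sup>+p. ennreal (snd p - fst p) \<partial>count_space C)"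
  unfolding lborel_eq_real using assms
  by (intro emeasure_interval_measure_Union_Icc) (auto simp: mono_def)

lemma frequently_at_within_dense_iff:
  fixes \<phi> :: "real \<Rightarrow> real"
  assumes S: "open S" and cont: "continuous_on S \<phi>"
    and dense: "\<And>V. open V \<Longrightarrow> V \<noteq> {} \<Longrightarrow> \<exists>h\<in>D. h \<in> V"
  shows "frequently (\<lambda>h. 0 < \<phi> h) (at a within S) \<longleftrightarrow>
    (\<forall>n::nat. \<exists>h\<in>D \<inter> S \<inter> ball a (inverse (Suc n)) - {a}. 0 < \<phi> h)"
proof
  assume "frequently (\<lambda>h. 0 < \<phi> h) (at a within S)"
  then have freq: "\<forall>d>0. \<exists>h\<in>S. h \<noteq> a \<and> dist h a < d \<and> 0 < \<phi> h"
    unfolding frequently_at by blast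
  show "\<forall>n::nat. \<exists>h\<in>D \<inter> S \<inter> ball a (inverse (Suc n)) - {a}. 0 < \<phi> h"
  proof
    fix n :: nat
    obtain A where A: "open A" "A \<inter> S = {h \<in> S. 0 < \<phi> h}"
      using open_Collect_positive[OF cont] by blast
    define V where "V = A \<inter> S \<inter> ball a (inverse (Suc n)) - {a}"
    obtain h where h: "h \<in> S" "h \<noteq> a" "dist h a < inverse (Suc n)" "0 < \<phi> h"
      using freq by (metis inverse_positive_iff_positive of_nat_0_less_iff zero_less_Suc)
    then have "h \<in> A \<inter> S" unfolding A(2) by simp
    then have "h \<in> V" using h by (simp add: V_def dist_commute)
    moreover have "open V" unfolding V_def by (intro open_Diff open_Int A(1) S open_ball closed_singleton)
    ultimately obtain h' where h': "h' \<in> D" "h' \<in> V" using dense by blast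
    then have "h' \<in> A \<inter> S" by (simp add: V_def)
    then have "0 < \<phi> h'" unfolding A(2) by simp
    with h' show "\<exists>h\<in>D \<inter> S \<inter> ball a (inverse (Suc n)) - {a}. 0 < \<phi> h"
      by (auto simp: V_def)
  qed
next
  assume dense_freq: "\<forall>n::nat. \<exists>h\<in>D \<inter> S \<inter> ball a (inverse (Suc n)) - {a}. 0 < \<phi> h"
  have "\<exists>h\<in>S. h \<noteq> a \<and> dist h a < d \<and> 0 < \<phi> h" if d: "0 < d" for d :: real
  proof -
    obtain n where n: "inverse (Suc n) < d" using reals_Archimedean[OF d] by auto
    then show ?thesis using dense_freq[rule_format, of n] by (auto simp: dist_commute)
  qed
  then show "frequently (\<lambda>h. 0 < \<phi> h) (at a within S)"
    unfolding frequently_at by blast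
qed

lemma borel_frequently_at_within:
  fixes \<phi> :: "real \<Rightarrow> 'a::topological_space \<Rightarrow> real"
  assumes S: "open S" and cont: "\<And>h. h \<in> S \<Longrightarrow> continuous_on UNIV (\<phi> h)"
    and cont_param: "\<And>x. continuous_on S (\<lambda>h. \<phi> h x)"
  shows "{x. frequently (\<lambda>h. 0 < \<phi> h x) (at a within S)} \<in> sets borel"
proof -
  obtain D :: "real set" where D: "countable D" "\<And>V. open V \<Longrightarrow> V \<noteq> {} \<Longrightarrow> \<exists>h\<in>D. h \<in> V"
    using countable_dense_setE by blast
  define H where "H n = D \<inter> S \<inter> ball a (inverse (Suc n)) - {a}" for n :: nat
  have "{x. frequently (\<lambda>h. 0 < \<phi> h x) (at a within S)} = (\<Inter>n. \<Union>h\<in>H n. {x. 0 < \<phi> h x})"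
    unfolding H_def by (auto simp: frequently_at_within_dense_iff[OF S cont_param D(2)])
  moreover have "(\<Union>h\<in>H n. {x. 0 < \<phi> h x}) \<in> sets borel" for n
  proof (rule sets.countable_UN'')
    show "countable (H n)" unfolding H_def using D(1) by (intro countable_Diff countable_Int1)
    fix h assume "h \<in> H n"
    then have "continuous_on UNIV (\<phi> h)" using cont by (simp add: H_def)
    then show "{x. 0 < \<phi> h x} \<in> sets borel"
      by (intro borel_open open_Collect_less continuous_on_const)
  qed
  ultimately show ?thesis by (simp add: sets.countable_INT'')
qed

lemma Limsup_le_Liminf_if_no_rational_gap:
  fixes f g :: "'a \<Rightarrow> real"
  assumes no_gap: "\<And>r s. r \<in> \<rat> \<Longrightarrow> s \<in> \<rat> \<Longrightarrow> r < s \<Longrightarrow>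
    \<not> (frequently (\<lambda>h. f h < r) F1 \<and> frequently (\<lambda>h. s < g h) F2)"
  shows "Limsup F2 (\<lambda>h. ereal (g h)) \<le> Liminf F1 (\<lambda>h. ereal (f h))"
proof (rule ccontr)
  assume "\<not> ?thesis"
  then have "Liminf F1 (\<lambda>h. ereal (f h)) < Limsup F2 (\<lambda>h. ereal (g h))" by (simp add: not_le)
  then obtain r0 where r0: "Liminf F1 (\<lambda>h. ereal (f h)) < ereal r0" "ereal r0 < Limsup F2 (\<lambda>h. ereal (g h))"
    using ereal_dense2 by blast
  obtain s0 where s0: "r0 < s0" "ereal s0 < Limsup F2 (\<lambda>h. ereal (g h))"
    using ereal_dense2[OF r0(2)] by auto
  obtain r where r: "r \<in> \<rat>" "r0 < r" "r < s0" using Rats_dense_in_real[OF s0(1)] by blast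
  obtain s where s: "s \<in> \<rat>" "r < s" "s < s0" using Rats_dense_in_real[OF r(3)] by blast
  have "frequently (\<lambda>h. f h < r) F1"
  proof (rule ccontr)
    assume "\<not> ?thesis"
    then have "eventually (\<lambda>h. ereal r \<le> ereal (f h)) F1" by (simp add: not_frequently not_less)
    then have "ereal r \<le> Liminf F1 (\<lambda>h. ereal (f h))" by (rule Liminf_bounded)
    moreover have "ereal r0 < ereal r" using r(2) by simp
    ultimately show False using r0(1) by order
  qed
  moreover have "frequently (\<lambda>h. s < g h) F2"
  proof (rule ccontr)
    assume "\<not> ?thesis"
    then have "eventually (\<lambda>h. ereal (g h) \<le> ereal s) F2" by (simp add: not_frequently not_less)
    then have "Limsup F2 (\<lambda>h. ereal (g h)) \<le> ereal s" by (rule Limsup_bounded)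
    moreover have "ereal s < ereal s0" using s(3) by simp
    ultimately show False using s0(2) by order
  qed
  ultimately show False using no_gap[OF r(1) s(1) s(2)] by blast
qed

lemma tendsto_common_limit_if_no_rational_gap:
  fixes f g :: "'a \<Rightarrow> real"
  assumes nontrivial: "F1 \<noteq> bot" "F2 \<noteq> bot"
    and bounded: "eventually (\<lambda>h. f h \<in> {lo..hi}) F1" "eventually (\<lambda>h. g h \<in> {lo..hi}) F2"
    and no_gap: "\<And>r s. r \<in> \<rat> \<Longrightarrow> s \<in> \<rat> \<Longrightarrow> r < s \<Longrightarrow>
      \<not> (frequently (\<lambda>h. f h < r) F1 \<and> frequently (\<lambda>h. s < g h) F2)"
      "\<And>r s. r \<in> \<rat> \<Longrightarrow> s \<in> \<rat> \<Longrightarrow> r < s \<Longrightarrow>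
      \<not> (frequently (\<lambda>h. g h < r) F2 \<and> frequently (\<lambda>h. s < f h) F1)"
  obtains D where "(f \<longlongrightarrow> D) F1" "(g \<longlongrightarrow> D) F2"
proof -
  let ?f = "\<lambda>h. ereal (f h)" and ?g = "\<lambda>h. ereal (g h)"
  have "Liminf F1 ?f \<le> Limsup F1 ?f" "Liminf F2 ?g \<le> Limsup F2 ?g"
    using nontrivial by (simp_all only: Liminf_le_Limsup trivial_limit_def not_False_eq_True)
  moreover have "Limsup F2 ?g \<le> Liminf F1 ?f" "Limsup F1 ?f \<le> Liminf F2 ?g"
    using no_gap by (simp_all add: Limsup_le_Liminf_if_no_rational_gap)
  ultimately have eq: "Liminf F1 ?f = Limsup F1 ?f" "Liminf F2 ?g = Limsup F1 ?f" "Limsup F2 ?g = Limsup F1 ?f"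
    by order+
  have "ereal lo \<le> Liminf F1 ?f" "Limsup F1 ?f \<le> ereal hi"
    using bounded(1) by (auto intro!: Liminf_bounded Limsup_bounded elim: eventually_mono)
  then obtain D where D: "Limsup F1 ?f = ereal D" using eq(1) by (cases "Limsup F1 ?f") auto
  have "(?f \<longlongrightarrow> ereal D) F1" "(?g \<longlongrightarrow> ereal D) F2"
    by (rule Liminf_eq_Limsup; use eq D nontrivial in simp)+
  then show ?thesis using that by simp
qed

locale mono_lipschitz =
  fixes F :: "real \<Rightarrow> real" and M :: real
  assumes mono: "mono F" and lipschitz: "M-lipschitz_on UNIV F"
begin

lemma M_nonneg: "0 \<le> M"
  using lipschitz by (rule lipschitz_on_nonneg)

lemma continuous: "continuous_on UNIV F"
  using lipschitz by (rule lipschitz_on_continuous_on)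

lemma increment_le: "x \<le> y \<Longrightarrow> F y - F x \<le> M * (y - x)"
  using lipschitz_onD[OF lipschitz, of y x] by (simp add: dist_real_def)

lemma slope_bounds:
  assumes "a \<noteq> b"
  shows "0 \<le> slope F a b" "slope F a b \<le> M"
proof -
  have *: "0 \<le> slope F a b \<and> slope F a b \<le> M" if "a < b" for a b
    using that monoD[OF mono, of a b] increment_le[of a b]
    by (simp add: slope_le_iff le_slope_iff)
  show "0 \<le> slope F a b" "slope F a b \<le> M"
    using *[of a b] *[of b a] assms by (auto simp: slope_commute neq_iff)
qed

lemma emeasure_Icc: "a \<le> b \<Longrightarrow> emeasure (interval_measure F) {a..b} = ennreal (F b - F a)"
  using mono continuous by (intro emeasure_interval_measure_Icc) (auto dest: monoD)

lemma emeasure_bounded_interval_le: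
  assumes I: "is_interval I" "bounded I"
  shows "emeasure (interval_measure F) I \<le> ennreal M * emeasure lborel I"
proof (cases "I = {}")
  case False
  define a where "a = Inf I"
  define b where "b = Sup I"
  have bdd: "bdd_below I" "bdd_above I" using I(2) by (auto simp: bounded_imp_bdd_below bounded_imp_bdd_above)
  have sub: "I \<subseteq> {a..b}" using bdd False by (auto simp: a_def b_def intro: cInf_lower cSup_upper)
  then have ab: "a \<le> b" using False by auto
  have sub2: "{a<..<b} \<subseteq> I"
  proof
    fix x assume x: "x \<in> {a<..<b}"
    then obtain y where "y \<in> I" "y < x" using cInf_less_iff[OF False bdd(1)] a_def by auto
    moreover obtain z where "z \<in> I" "x < z" using x less_cSup_iff[OF False bdd(2)] b_def by auto
    ultimately show "x \<in> I" using I(1) unfolding is_interval_1 by (meson less_imp_le)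
  qed
  have "emeasure (interval_measure F) I \<le> emeasure (interval_measure F) {a..b}"
    by (rule emeasure_mono[OF sub]) simp
  also have "\<dots> = ennreal (F b - F a)" by (rule emeasure_Icc[OF ab])
  also have "\<dots> \<le> ennreal (M * (b - a))" using increment_le[OF ab] by (rule ennreal_leI)
  also have "\<dots> = ennreal M * emeasure lborel {a<..<b}" using ab M_nonneg by (simp add: ennreal_mult)
  also have "\<dots> \<le> ennreal M * emeasure lborel I"
    using real_interval_borel_measurable[OF I(1)] by (intro mult_left_mono emeasure_mono[OF sub2]) auto
  finally show ?thesis .
qed simp

lemma emeasure_interval_le:
  assumes I: "is_interval I"
  shows "emeasure (interval_measure F) I \<le> ennreal M * emeasure lborel I"
proof -
  define J where "J n = I \<inter> {- real n .. real n}" for n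
  have J: "J n \<in> sets borel" "is_interval (J n)" "bounded (J n)" "J n \<subseteq> I" for n
    using real_interval_borel_measurable[OF I] I by (auto simp: J_def intro!: is_interval_Int bounded_Int)
  have "(\<Union>n. J n) = I"
    unfolding J_def by (auto, meson abs_le_iff real_arch_simple order_trans minus_le_iff)
  moreover have "incseq J" unfolding J_def incseq_def by auto
  then have "(SUP n. emeasure (interval_measure F) (J n)) = emeasure (interval_measure F) (\<Union>n. J n)"
    using J(1) by (intro SUP_emeasure_incseq) auto
  ultimately have "emeasure (interval_measure F) I = (SUP n. emeasure (interval_measure F) (J n))"
    by simp
  also have "\<dots> \<le> ennreal M * emeasure lborel I"
  proof (rule SUP_least)
    fix n
    have "emeasure (interval_measure F) (J n) \<le> ennreal M * emeasure lborel (J n)"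
      using J by (intro emeasure_bounded_interval_le)
    also have "\<dots> \<le> ennreal M * emeasure lborel I"
      using J real_interval_borel_measurable[OF I] by (intro mult_left_mono emeasure_mono) auto
    finally show "emeasure (interval_measure F) (J n) \<le> ennreal M * emeasure lborel I" .
  qed
  finally show ?thesis .
qed

lemma emeasure_open_le:
  assumes "open U"
  shows "emeasure (interval_measure F) U \<le> ennreal M * emeasure lborel U"
proof -
  let ?C = "components U"
  have opn: "\<And>C. C \<in> ?C \<Longrightarrow> open C" using open_components[OF assms] by blast
  have disj: "pairwise disjnt ?C" using pairwise_disjoint_components by (simp add: pairwise_def disjnt_def)
  have C: "countable ?C" "disjoint_family_on id ?C" "\<And>C. C \<in> ?C \<Longrightarrow> C \<in> sets borel"
    using countable_disjoint_open_subsets[OF opn disj] disj opn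
    by (auto simp: disjoint_family_on_def pairwise_def disjnt_def)
  have "is_interval C" if "C \<in> ?C" for C
    using that in_components_connected is_interval_connected_1 by blast
  note C = C this
  have "emeasure (interval_measure F) U = (\<integral>\<^sup>+C. emeasure (interval_measure F) C \<partial>count_space ?C)"
    using emeasure_UN_countable[OF _ C(1,2), of "interval_measure F"] C(3) by simp
  also have "\<dots> \<le> (\<integral>\<^sup>+C. ennreal M * emeasure lborel C \<partial>count_space ?C)"
    using C(4) by (intro nn_integral_mono emeasure_interval_le) simp
  also have "\<dots> = ennreal M * (\<integral>\<^sup>+C. emeasure lborel C \<partial>count_space ?C)"
    by (rule nn_integral_cmult) simp
  also have "(\<integral>\<^sup>+C. emeasure lborel C \<partial>count_space ?C) = emeasure lborel U"
    using emeasure_UN_countable[OF _ C(1,2), of lborel] C(3) by simp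
  finally show ?thesis .
qed

lemma emeasure_le:
  assumes A: "A \<in> sets borel"
  shows "emeasure (interval_measure F) A \<le> ennreal M * emeasure lborel A"
proof (rule ennreal_le_epsilon)
  fix e :: real assume "0 < e"
  then obtain U where U: "open U" "A \<subseteq> U" "emeasure lborel (U - A) < ennreal (e / (M + 1))"
    using lborel_outer_open[OF A, of "e / (M + 1)"] M_nonneg by auto
  have "emeasure (interval_measure F) A \<le> emeasure (interval_measure F) U"
    using U(1,2) by (intro emeasure_mono) auto
  also have "\<dots> \<le> ennreal M * emeasure lborel U"
    using U(1) by (rule emeasure_open_le)
  also have "\<dots> = ennreal M * emeasure lborel A + ennreal M * emeasure lborel (U - A)"
    using A U by (simp add: emeasure_eq_plus_Diff[of A lborel U] distrib_left)
  also have "ennreal M * emeasure lborel (U - A) \<le> ennreal M * ennreal (e / (M + 1))"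
    using U(3) by (intro mult_left_mono) auto
  also have "\<dots> \<le> ennreal e"
    using M_nonneg \<open>0 < e\<close> by (rule ennreal_mult_divide_add_one_le)
  finally show "emeasure (interval_measure F) A \<le> ennreal M * emeasure lborel A + ennreal e"
    by (simp add: add_left_mono)
qed

lemma emeasure_negligible:
  assumes "A \<in> sets borel" "negligible A"
  shows "emeasure (interval_measure F) A = 0"
  using emeasure_le[OF assms(1)] emeasure_lborel_negligible[OF assms] by simp

lemma emeasure_Union_Icc_le:
  assumes C: "countable C" "disjoint_family_on (\<lambda>p. {fst p..snd p}) C" and r: "0 \<le> r"
    and slope: "\<And>p. p \<in> C \<Longrightarrow> fst p < snd p \<and> slope F (fst p) (snd p) \<le> r"
  shows "emeasure (interval_measure F) (\<Union>p\<in>C. {fst p..snd p}) \<le>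
    ennreal r * emeasure lborel (\<Union>p\<in>C. {fst p..snd p})"
proof -
  have "emeasure (interval_measure F) (\<Union>p\<in>C. {fst p..snd p}) =
      (\<integral>\<^sup>+p. ennreal (F (snd p) - F (fst p)) \<partial>count_space C)"
    using C slope mono continuous by (intro emeasure_interval_measure_Union_Icc) (auto intro: less_imp_le)
  also have "\<dots> \<le> (\<integral>\<^sup>+p. ennreal r * ennreal (snd p - fst p) \<partial>count_space C)"
  proof (intro nn_integral_mono)
    fix p assume "p \<in> space (count_space C)"
    then have "fst p < snd p" "slope F (fst p) (snd p) \<le> r" using slope by auto
    then show "ennreal (F (snd p) - F (fst p)) \<le> ennreal r * ennreal (snd p - fst p)"
      using r by (simp add: slope_le_iff ennreal_mult[symmetric] ennreal_leI)
  qed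
  also have "\<dots> = ennreal r * emeasure lborel (\<Union>p\<in>C. {fst p..snd p})"
    using C slope by (simp add: nn_integral_cmult emeasure_lborel_Union_Icc less_imp_le)
  finally show ?thesis .
qed

lemma emeasure_Union_Icc_ge:
  assumes C: "countable C" "disjoint_family_on (\<lambda>p. {fst p..snd p}) C" and s: "0 \<le> s"
    and slope: "\<And>p. p \<in> C \<Longrightarrow> fst p < snd p \<and> s \<le> slope F (fst p) (snd p)"
  shows "ennreal s * emeasure lborel (\<Union>p\<in>C. {fst p..snd p}) \<le>
    emeasure (interval_measure F) (\<Union>p\<in>C. {fst p..snd p})"
proof -
  have "ennreal s * emeasure lborel (\<Union>p\<in>C. {fst p..snd p}) =
      (\<integral>\<^sup>+p. ennreal s * ennreal (snd p - fst p) \<partial>count_space C)"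
    using C slope by (simp add: nn_integral_cmult emeasure_lborel_Union_Icc less_imp_le)
  also have "\<dots> \<le> (\<integral>\<^sup>+p. ennreal (F (snd p) - F (fst p)) \<partial>count_space C)"
  proof (intro nn_integral_mono)
    fix p assume "p \<in> space (count_space C)"
    then have "fst p < snd p" "s \<le> slope F (fst p) (snd p)" using slope by auto
    then show "ennreal s * ennreal (snd p - fst p) \<le> ennreal (F (snd p) - F (fst p))"
      using s by (simp add: le_slope_iff ennreal_mult[symmetric] ennreal_leI)
  qed
  also have "\<dots> = emeasure (interval_measure F) (\<Union>p\<in>C. {fst p..snd p})"
    using C slope mono continuous
    by (intro emeasure_interval_measure_Union_Icc[symmetric]) (auto intro: less_imp_le)
  finally show ?thesis .
qed

lemma emeasure_le_if_slope_le:
  assumes E: "E \<in> sets borel" and r: "0 \<le> r"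
    and cover: "vitali_interval_cover (\<lambda>a b. slope F a b \<le> r) E"
  shows "emeasure (interval_measure F) E \<le> ennreal r * emeasure lborel E"
proof (rule ennreal_le_epsilon)
  fix e :: real assume "0 < e"
  then obtain U where U: "open U" "E \<subseteq> U" "emeasure lborel (U - E) < ennreal (e / (r + 1))"
    using lborel_outer_open[OF E, of "e / (r + 1)"] r by auto
  obtain C where C: "countable C"
    "\<And>p. p \<in> C \<Longrightarrow> fst p < snd p \<and> {fst p..snd p} \<subseteq> U \<and> slope F (fst p) (snd p) \<le> r"
    "disjoint_family_on (\<lambda>p. {fst p..snd p}) C" "negligible (E - (\<Union>p\<in>C. {fst p..snd p}))"
    using vitali_interval_cover_disjoint_subfamily[OF cover U(1,2)] by blast
  define W where "W = (\<Union>p\<in>C. {fst p..snd p})"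
  have W: "W \<in> sets borel" "W \<subseteq> U"
    using C by (auto simp: W_def intro!: sets.countable_UN'')
  then have "E - W \<in> null_sets (interval_measure F)"
    using C(4) E by (auto simp: W_def emeasure_negligible intro!: null_setsI)
  then have "emeasure (interval_measure F) E \<le> emeasure (interval_measure F) W"
    using W(1) E emeasure_Un_null_set[of W "interval_measure F" "E - W"]
    by (metis Un_Diff_cancel emeasure_mono sets_interval_measure sets.Un sup_ge2)
  also have "\<dots> \<le> ennreal r * emeasure lborel W"
    unfolding W_def using C r by (intro emeasure_Union_Icc_le) auto
  also have "\<dots> \<le> ennreal r * emeasure lborel U"
    using W U(1) by (intro mult_left_mono emeasure_mono) auto
  also have "\<dots> = ennreal r * emeasure lborel E + ennreal r * emeasure lborel (U - E)"
    using E U by (simp add: emeasure_eq_plus_Diff[of E lborel U] distrib_left)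
  also have "ennreal r * emeasure lborel (U - E) \<le> ennreal r * ennreal (e / (r + 1))"
    using U(3) by (intro mult_left_mono) auto
  also have "\<dots> \<le> ennreal e"
    using r \<open>0 < e\<close> by (rule ennreal_mult_divide_add_one_le)
  finally show "emeasure (interval_measure F) E \<le> ennreal r * emeasure lborel E + ennreal e"
    by (simp add: add_left_mono)
qed

lemma emeasure_ge_if_slope_ge:
  assumes E: "E \<in> sets borel" and s: "0 \<le> s"
    and cover: "vitali_interval_cover (\<lambda>a b. s \<le> slope F a b) E"
  shows "ennreal s * emeasure lborel E \<le> emeasure (interval_measure F) E"
proof (rule ennreal_le_epsilon)
  fix e :: real assume "0 < e"
  then obtain U where U: "open U" "E \<subseteq> U" "emeasure lborel (U - E) < ennreal (e / (M + 1))"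
    using lborel_outer_open[OF E, of "e / (M + 1)"] M_nonneg by auto
  obtain C where C: "countable C"
    "\<And>p. p \<in> C \<Longrightarrow> fst p < snd p \<and> {fst p..snd p} \<subseteq> U \<and> s \<le> slope F (fst p) (snd p)"
    "disjoint_family_on (\<lambda>p. {fst p..snd p}) C" "negligible (E - (\<Union>p\<in>C. {fst p..snd p}))"
    using vitali_interval_cover_disjoint_subfamily[OF cover U(1,2)] by blast
  define W where "W = (\<Union>p\<in>C. {fst p..snd p})"
  have W: "W \<in> sets borel" "W \<subseteq> U"
    using C by (auto simp: W_def intro!: sets.countable_UN'')
  then have "E - W \<in> null_sets lborel"
    using C(4) E by (auto simp: W_def emeasure_lborel_negligible intro!: null_setsI)
  then have "emeasure lborel E \<le> emeasure lborel W"
    using W(1) E emeasure_Un_null_set[of W lborel "E - W"]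
    by (metis Un_Diff_cancel emeasure_mono sets_lborel sets.Un sup_ge2)
  then have "ennreal s * emeasure lborel E \<le> ennreal s * emeasure lborel W"
    by (rule mult_left_mono) simp
  also have "\<dots> \<le> emeasure (interval_measure F) W"
    unfolding W_def using C s by (intro emeasure_Union_Icc_ge) auto
  also have "\<dots> \<le> emeasure (interval_measure F) U"
    using W U(1) by (intro emeasure_mono) auto
  also have "\<dots> = emeasure (interval_measure F) E + emeasure (interval_measure F) (U - E)"
    using E U by (simp add: emeasure_eq_plus_Diff[of E _ U])
  also have "emeasure (interval_measure F) (U - E) \<le> ennreal M * emeasure lborel (U - E)"
    using U(1) E by (intro emeasure_le) auto
  also have "\<dots> \<le> ennreal M * ennreal (e / (M + 1))"
    using U(3) by (intro mult_left_mono) auto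
  also have "\<dots> \<le> ennreal e"
    using M_nonneg \<open>0 < e\<close> by (rule ennreal_mult_divide_add_one_le)
  finally show "ennreal s * emeasure lborel E \<le> emeasure (interval_measure F) E + ennreal e"
    by (simp add: add_left_mono)
qed

lemma negligible_if_slope_gap:
  assumes E: "E \<in> sets borel" and rs: "r < s"
    and le: "vitali_interval_cover (\<lambda>a b. slope F a b \<le> r) E"
    and ge: "vitali_interval_cover (\<lambda>a b. s \<le> slope F a b) E"
  shows "negligible E"
proof (cases "E = {}")
  case False
  then obtain x where "x \<in> E" by blast
  then obtain a b where "a < b" "slope F a b \<le> r"
    using le zero_less_one unfolding vitali_interval_cover_def by blast
  then have r: "0 \<le> r" using slope_bounds(1)[of a b] by simp
  define En where "En n = E \<inter> {- real n .. real n}" for n :: nat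
  have "negligible (En n)" for n
  proof -
    have En: "En n \<in> sets borel" using E by (simp add: En_def)
    have "emeasure lborel (En n) \<le> emeasure lborel {- real n .. real n}"
      by (rule emeasure_mono) (auto simp: En_def)
    then obtain t where t: "emeasure lborel (En n) = ennreal t" "0 \<le> t"
      by (cases "emeasure lborel (En n)") (auto simp: top_unique)
    have "En n \<subseteq> E" by (simp add: En_def)
    then have "ennreal s * emeasure lborel (En n) \<le> ennreal r * emeasure lborel (En n)"
      using emeasure_ge_if_slope_ge[OF En] emeasure_le_if_slope_le[OF En r] le ge r rs
      by (meson order.trans less_imp_le vitali_interval_cover_subset)
    then have "ennreal (s * t) \<le> ennreal (r * t)"
      using t r rs by (simp add: ennreal_mult)
    then have "t = 0" using t r rs by (simp add: ennreal_le_iff mult_le_cancel_right)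
    then show ?thesis using En t by (simp add: negligible_iff_emeasure0 emeasure_completion)
  qed
  then have "negligible (\<Union>n. En n)" by (rule negligible_Union_nat)
  moreover have "(\<Union>n. En n) = E"
    unfolding En_def by (auto, meson abs_le_iff real_arch_simple order_trans minus_le_iff)
  ultimately show ?thesis by simp
qed simp

lemma continuous_on_slope_shift:
  shows "continuous_on A (\<lambda>x. slope F x (x + h))"
    and "0 \<notin> S \<Longrightarrow> continuous_on S (\<lambda>h. slope F x (x + h))"
proof -
  have eq: "slope F x (x + h) = (F (x + h) - F x) * inverse h" for x h
    by (simp add: slope_def divide_inverse)
  show "continuous_on A (\<lambda>x. slope F x (x + h))"
    unfolding eq by (intro continuous_intros continuous_on_compose2[OF continuous]) auto
  show "continuous_on S (\<lambda>h. slope F x (x + h))" if "0 \<notin> S"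
    unfolding eq using that by (intro continuous_intros continuous_on_compose2[OF continuous]) auto
qed

lemma negligible_slope_gap:
  assumes rs: "r < s" and S: "open S1" "open S2" "0 \<notin> S1" "0 \<notin> S2"
  shows "negligible {x. frequently (\<lambda>h. slope F x (x + h) < r) (at 0 within S1) \<and>
                        frequently (\<lambda>h. s < slope F x (x + h)) (at 0 within S2)}"
    (is "negligible ?E")
proof (rule negligible_if_slope_gap[OF _ rs])
  have "{x. frequently (\<lambda>h. 0 < r - slope F x (x + h)) (at 0 within S1)} \<in> sets borel"
    using S by (intro borel_frequently_at_within continuous_on_slope_shift continuous_intros) auto
  moreover have "{x. frequently (\<lambda>h. 0 < slope F x (x + h) - s) (at 0 within S2)} \<in> sets borel"
    using S by (intro borel_frequently_at_within continuous_on_slope_shift continuous_intros) auto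
  ultimately show "?E \<in> sets borel" by (simp add: Collect_conj_eq)
  show "vitali_interval_cover (\<lambda>a b. slope F a b \<le> r) ?E"
    by (rule vitali_interval_cover_slope) (auto elim: frequently_elim1)
  show "vitali_interval_cover (\<lambda>a b. s \<le> slope F a b) ?E"
    by (rule vitali_interval_cover_slope) (auto elim: frequently_elim1)
qed

lemma differentiable_if_no_slope_gap:
  assumes no_gap:
    "\<And>r s. r \<in> \<rat> \<Longrightarrow> s \<in> \<rat> \<Longrightarrow> r < s \<Longrightarrow>
      \<not> (frequently (\<lambda>h. slope F x (x + h) < r) (at_left 0) \<and> frequently (\<lambda>h. s < slope F x (x + h)) (at_right 0))"
    "\<And>r s. r \<in> \<rat> \<Longrightarrow> s \<in> \<rat> \<Longrightarrow> r < s \<Longrightarrow>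
      \<not> (frequently (\<lambda>h. slope F x (x + h) < r) (at_right 0) \<and> frequently (\<lambda>h. s < slope F x (x + h)) (at_left 0))"
  shows "F differentiable at x"
proof -
  have bounded: "eventually (\<lambda>h. slope F x (x + h) \<in> {0..M}) (at 0 within S)" for S
  proof -
    have "eventually (\<lambda>h. h \<noteq> 0) (at 0 within S)" by (simp add: eventually_at_filter)
    then show ?thesis by eventually_elim (use slope_bounds[of x] in auto)
  qed
  obtain D where "((\<lambda>h. slope F x (x + h)) \<longlongrightarrow> D) (at_left 0)" "((\<lambda>h. slope F x (x + h)) \<longlongrightarrow> D) (at_right 0)"
    by (rule tendsto_common_limit_if_no_rational_gap[OF _ _ bounded bounded no_gap]) simp_all
  then have "((\<lambda>h. slope F x (x + h)) \<longlongrightarrow> D) (at 0)" by (rule filterlim_split_at)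
  then have "(F has_real_derivative D) (at x)" by (simp add: DERIV_def slope_def)
  then show ?thesis using real_differentiable_def by blast
qed

lemma negligible_not_differentiable: "negligible {x. \<not> F differentiable at x}"
proof -
  define gap where "gap S1 S2 r s = {x. frequently (\<lambda>h. slope F x (x + h) < r) (at 0 within S1) \<and>
      frequently (\<lambda>h. s < slope F x (x + h)) (at 0 within S2)}" for S1 S2 :: "real set" and r s
  define P where "P = {(r :: real, s). r \<in> \<rat> \<and> s \<in> \<rat> \<and> r < s}"
  have "countable P"
    by (rule countable_subset[of _ "\<rat> \<times> \<rat>"]) (auto simp: P_def intro: countable_rat)
  then have "negligible (\<Union>(r, s)\<in>P. gap {..<0} {0<..} r s \<union> gap {0<..} {..<0} r s)"
    unfolding gap_def by (intro negligible_countable_Union) (auto simp: P_def intro!: negligible_slope_gap)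
  moreover have "{x. \<not> F differentiable at x} \<subseteq> (\<Union>(r, s)\<in>P. gap {..<0} {0<..} r s \<union> gap {0<..} {..<0} r s)"
    using differentiable_if_no_slope_gap unfolding gap_def P_def by blast
  ultimately show ?thesis by (rule negligible_subset)
qed

end

lemma lipschitz_negligible_not_differentiable:
  fixes G :: "real \<Rightarrow> real"
  assumes lip: "L-lipschitz_on UNIV G"
  shows "negligible {x. \<not> G differentiable at x}"
proof -
  have L: "0 \<le> L" using lip by (rule lipschitz_on_nonneg)
  interpret mono_lipschitz "\<lambda>x. G x + L * x" "L + L"
  proof
    show "mono (\<lambda>x. G x + L * x)"
    proof (rule monoI)
      fix x y :: real assume "x \<le> y"
      then show "G x + L * x \<le> G y + L * y"
        using lipschitz_onD[OF lip, of x y] by (simp add: dist_real_def abs_le_iff algebra_simps)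
    qed
    show "(L + L)-lipschitz_on UNIV (\<lambda>x. G x + L * x)"
      using lipschitz_on_add[OF lip lipschitz_on_cmult_real_nonneg[OF lipschitz_on_id L]] by simp
  qed
  have "{x. \<not> G differentiable at x} \<subseteq> {x. \<not> (\<lambda>x. G x + L * x) differentiable at x}"
  proof safe
    fix x assume "\<not> G differentiable at x" "(\<lambda>x. G x + L * x) differentiable at x"
    then obtain D where "((\<lambda>x. G x + L * x) has_real_derivative D) (at x)"
      using real_differentiable_def by blast
    then have "((\<lambda>y. (G y + L * y) - L * y) has_real_derivative D - L * 1) (at x)"
      by (rule DERIV_diff) (rule DERIV_cmult[OF DERIV_ident])
    then have "(G has_real_derivative D - L) (at x)" by simp
    then show False using \<open>\<not> G differentiable at x\<close> real_differentiable_def by blast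
  qed
  then show ?thesis using negligible_not_differentiable negligible_subset by blast
qed

section \<open>Fundamental theorem of calculus for Lipschitz functions\<close>

lemma DERIV_LIMSEQ_inverse_Suc:
  assumes "(f has_real_derivative D) (at x)"
  shows "(\<lambda>k. (f (x + inverse (Suc k)) - f x) / inverse (Suc k)) \<longlonglongrightarrow> D"
proof -
  have "((\<lambda>h. (f (x + h) - f x) / h) \<longlongrightarrow> D) (at 0)" using assms by (simp add: DERIV_def)
  moreover have "filterlim (\<lambda>k. inverse (real (Suc k))) (at 0) sequentially"
    unfolding filterlim_at using LIMSEQ_inverse_real_of_nat by auto
  ultimately show ?thesis by (rule filterlim_compose)
qed

lemma has_integral_difference_quotient:
  fixes G \<Phi> :: "real \<Rightarrow> real"
  assumes \<Phi>: "\<And>t. t \<in> {a..b + h} \<Longrightarrow> (\<Phi> has_real_derivative G t) (at t)" and ab: "a \<le> b" and h: "0 \<le> h"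
  shows "((\<lambda>t. (G (t + h) - G t) / h) has_integral (\<Phi> (b + h) - \<Phi> b) / h - (\<Phi> (a + h) - \<Phi> a) / h) {a..b}"
proof -
  have "(G has_integral \<Phi> b - \<Phi> a) {a..b}"
  proof (rule fundamental_theorem_of_calculus[OF ab])
    fix t assume "t \<in> {a..b}"
    then have "(\<Phi> has_real_derivative G t) (at t)" using \<Phi> h by auto
    then show "(\<Phi> has_vector_derivative G t) (at t within {a..b})"
      by (simp add: has_real_derivative_iff_has_vector_derivative has_vector_derivative_at_within)
  qed
  moreover have "((\<lambda>t. G (t + h)) has_integral \<Phi> (b + h) - \<Phi> (a + h)) {a..b}"
  proof (rule fundamental_theorem_of_calculus[OF ab, of "\<lambda>t. \<Phi> (t + h)"])
    fix t assume "t \<in> {a..b}"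
    then have "(\<Phi> has_real_derivative G (t + h)) (at (t + h))" using \<Phi> h by auto
    then have "((\<lambda>t. \<Phi> (t + h)) has_real_derivative G (t + h) * 1) (at t)"
      by (intro DERIV_chain2[of \<Phi>]) (auto intro!: derivative_eq_intros)
    then show "((\<lambda>t. \<Phi> (t + h)) has_vector_derivative G (t + h)) (at t within {a..b})"
      by (simp add: has_real_derivative_iff_has_vector_derivative has_vector_derivative_at_within)
  qed
  ultimately have "((\<lambda>t. (G (t + h) - G t) / h) has_integral ((\<Phi> (b + h) - \<Phi> (a + h)) - (\<Phi> b - \<Phi> a)) / h) {a..b}"
    by (intro has_integral_divide has_integral_diff)
  moreover have "((\<Phi> (b + h) - \<Phi> (a + h)) - (\<Phi> b - \<Phi> a)) / h = (\<Phi> (b + h) - \<Phi> b) / h - (\<Phi> (a + h) - \<Phi> a) / h"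
    by (simp add: diff_divide_distrib)
  ultimately show ?thesis by simp
qed

lemma LIMSEQ_integral_difference_quotient:
  fixes G :: "real \<Rightarrow> real"
  assumes cont: "continuous_on UNIV G" and ab: "a \<le> b"
  shows "(\<lambda>k. integral {a..b} (\<lambda>t. (G (t + inverse (Suc k)) - G t) / inverse (Suc k)))
    \<longlonglongrightarrow> G b - G a"
proof -
  define \<Phi> where "\<Phi> x = integral {a - 1..x} G" for x
  have \<Phi>: "(\<Phi> has_real_derivative G t) (at t)" if "t \<in> {a..b + 1}" for t
  proof -
    have "(\<Phi> has_real_derivative G t) (at t within {a - 1..b + 2})"
      unfolding \<Phi>_def using that by (intro integral_has_real_derivative continuous_on_subset[OF cont]) auto
    moreover have "at t within {a - 1..b + 2} = at t" using that by (intro at_within_interior) auto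
    ultimately show ?thesis by simp
  qed
  have eq: "integral {a..b} (\<lambda>t. (G (t + inverse (Suc k)) - G t) / inverse (Suc k)) =
      (\<Phi> (b + inverse (Suc k)) - \<Phi> b) / inverse (Suc k) - (\<Phi> (a + inverse (Suc k)) - \<Phi> a) / inverse (Suc k)"
    for k
  proof (intro integral_unique has_integral_difference_quotient[OF _ ab])
    have "inverse (real (Suc k)) \<le> 1" by (simp add: field_simps)
    then show "(\<Phi> has_real_derivative G t) (at t)" if "t \<in> {a..b + inverse (Suc k)}" for t
      using that by (intro \<Phi>) auto
  qed simp
  have "(\<lambda>k. (\<Phi> (b + inverse (Suc k)) - \<Phi> b) / inverse (Suc k) - (\<Phi> (a + inverse (Suc k)) - \<Phi> a) / inverse (Suc k))
      \<longlonglongrightarrow> G b - G a"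
    using ab by (intro tendsto_diff DERIV_LIMSEQ_inverse_Suc \<Phi>) auto
  then show ?thesis by (simp only: eq)
qed

lemma lipschitz_has_integral_deriv:
  fixes G :: "real \<Rightarrow> real"
  assumes lip: "L-lipschitz_on UNIV G" and ab: "a \<le> b"
  shows "(deriv G has_integral G b - G a) {a..b}"
proof -
  define S where "S = {a..b} - {x. \<not> G differentiable at x}"
  have spike: "negligible {x \<in> {a..b} - S. f x \<noteq> 0}" "negligible {x \<in> S - {a..b}. f x \<noteq> 0}"
    for f :: "real \<Rightarrow> real"
    using lipschitz_negligible_not_differentiable[OF lip] by (auto simp: S_def intro: negligible_subset)
  define q where "q k t = (G (t + inverse (Suc k)) - G t) / inverse (Suc k)" for k t
  have "norm (q k t) \<le> L" for k t
    using lipschitz_onD[OF lip, of "t + inverse (Suc k)" t]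
    by (simp add: q_def dist_real_def abs_divide pos_divide_le_eq)
  moreover have "(\<lambda>k. q k t) \<longlonglongrightarrow> deriv G t" if "t \<in> S" for t
    using that unfolding S_def q_def
    by (intro DERIV_LIMSEQ_inverse_Suc) (simp add: DERIV_deriv_iff_real_differentiable)
  moreover have "q k integrable_on S" for k
    unfolding q_def
    by (intro integrable_spike_set[OF _ spike] integrable_continuous_interval continuous_intros
        continuous_on_compose2[OF lipschitz_on_continuous_on[OF lip]]) auto
  moreover have "(\<lambda>_. L) integrable_on S"
    by (rule integrable_spike_set[OF integrable_const_ivl spike])
  ultimately have "deriv G integrable_on S" "(\<lambda>k. integral S (q k)) \<longlonglongrightarrow> integral S (deriv G)"
    using dominated_convergence[of q S "\<lambda>_. L" "deriv G"] by auto
  moreover have "(\<lambda>k. integral {a..b} (q k)) \<longlonglongrightarrow> G b - G a"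
    unfolding q_def by (rule LIMSEQ_integral_difference_quotient[OF lipschitz_on_continuous_on[OF lip] ab])
  then have "(\<lambda>k. integral S (q k)) \<longlonglongrightarrow> G b - G a"
    by (simp add: integral_spike_set[OF spike])
  ultimately have "(deriv G has_integral G b - G a) S"
    using LIMSEQ_unique by (metis integrable_integral)
  then show ?thesis using has_integral_spike_set_eq[OF spike] by blast
qed

lemma lipschitz_on_has_integral_deriv:
  fixes g :: "real \<Rightarrow> real"
  assumes lip: "L-lipschitz_on {a..b} g" and ab: "a \<le> b"
  shows "(deriv g has_integral g b - g a) {a..b}"
proof -
  define clamp where "clamp t = max a (min b t)" for t
  define G where "G t = g (clamp t)" for t
  have "L-lipschitz_on UNIV G"
  proof (rule lipschitz_onI)
    fix x y :: real
    have "dist (G x) (G y) \<le> L * dist (clamp x) (clamp y)"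
      unfolding G_def using ab by (intro lipschitz_onD[OF lip]) (auto simp: clamp_def)
    also have "\<dots> \<le> L * dist x y"
      using lipschitz_on_nonneg[OF lip] by (intro mult_left_mono) (auto simp: clamp_def dist_real_def)
    finally show "dist (G x) (G y) \<le> L * dist x y" .
  qed (rule lipschitz_on_nonneg[OF lip])
  then have "(deriv G has_integral G b - G a) {a..b}" using ab by (rule lipschitz_has_integral_deriv)
  moreover have "G b = g b" "G a = g a" using ab by (auto simp: G_def clamp_def)
  moreover have "deriv g t = deriv G t" if "t \<in> {a..b} - {a, b}" for t
  proof (rule deriv_cong_ev)
    have "eventually (\<lambda>x. x \<in> {a<..<b}) (nhds t)"
      using that by (intro eventually_nhds_in_open) auto
    then show "eventually (\<lambda>x. g x = G x) (nhds t)"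
      by eventually_elim (auto simp: G_def clamp_def)
  qed simp
  ultimately show ?thesis
    using has_integral_spike_finite_eq[of "{a, b}" "{a..b}" "deriv g" "deriv G"] by auto
qed

lemma deriv_locally_constant:
  fixes g :: "real \<Rightarrow> real"
  assumes "open U" "t \<in> U" "\<And>x. x \<in> U \<Longrightarrow> g x = c"
  shows "deriv g t = 0"
proof -
  have "eventually (\<lambda>x. x \<in> U) (nhds t)" using assms by (intro eventually_nhds_in_open)
  then have "eventually (\<lambda>x. g x = c) (nhds t)" by eventually_elim (use assms in auto)
  then have "deriv g t = deriv (\<lambda>_. c) t" by (rule deriv_cong_ev) simp
  then show ?thesis by simp
qed

lemma integral_mult_deriv_plateaus:
  fixes f g :: "real \<Rightarrow> real"
  assumes ordered: "a \<le> b" "b \<le> c" "c \<le> d" "d \<le> e"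
    and f: "\<And>t. t \<in> {a..b} \<Longrightarrow> f t = \<alpha>" "\<And>t. t \<in> {c..d} \<Longrightarrow> f t = 0"
    and g: "g a = 0" "\<And>t. t \<in> {b..c} \<Longrightarrow> g t = \<beta>" "\<And>t. t \<in> {d..e} \<Longrightarrow> g t = 0"
    and lip: "L-lipschitz_on {a..b} g"
  shows "integral {a..e} (\<lambda>t. f t * deriv g t) = \<alpha> * \<beta>"
proof -
  have "((\<lambda>t. \<alpha> * deriv g t) has_integral \<alpha> * \<beta>) {a..b}"
    using has_integral_mult_right[OF lipschitz_on_has_integral_deriv[OF lip ordered(1)]] g(1,2) ordered by simp
  then have restricted: "((\<lambda>t. if t \<in> {a..b} then \<alpha> * deriv g t else 0) has_integral \<alpha> * \<beta>) {a..e}"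
    using has_integral_restrict_closed_subinterval[of _ _ a b a e] ordered by auto
  have "f t * deriv g t = (if t \<in> {a..b} then \<alpha> * deriv g t else 0)"
    if t_in: "t \<in> {a..e} - {e}" for t
  proof -
    have "t \<in> {a..b} \<or> t \<in> {b<..<c} \<or> t \<in> {c..d} \<or> t \<in> {d<..<e}"
      using t_in ordered by auto
    then consider "t \<in> {a..b}" | "t \<in> {b<..<c}" | "t \<in> {c..d}" | "t \<in> {d<..<e}"
      by blast
    then show ?thesis
    proof cases
      case 2
      then have "deriv g t = 0" by (intro deriv_locally_constant[where U = "{b<..<c}"]) (use g(2) in auto)
      then show ?thesis by simp
    next
      case 4
      then have "deriv g t = 0" by (intro deriv_locally_constant[where U = "{d<..<e}"]) (use g(3) in auto)
      then show ?thesis by simp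
    qed (use f in auto)
  qed
  then have "((\<lambda>t. f t * deriv g t) has_integral \<alpha> * \<beta>) {a..e}"
    by (intro has_integral_spike_finite[OF _ _ restricted, of "{e}"]) auto
  then show ?thesis by (rule integral_unique)
qed

section \<open>Separating the arcs of an injective closed curve\<close>

lemma compact_infdist_ge:
  fixes K K' :: "'a::metric_space set"
  assumes K: "compact K" and K': "closed K'" "K' \<noteq> {}" and disj: "K \<inter> K' = {}"
  obtains \<delta> where "0 < \<delta>" "\<And>z. z \<in> K \<Longrightarrow> \<delta> \<le> infdist z K'"
proof (cases "K = {}")
  case False
  have "continuous_on K (\<lambda>z. infdist z K')" by (intro continuous_intros)
  then obtain z0 where z0: "z0 \<in> K" "\<And>z. z \<in> K \<Longrightarrow> infdist z0 K' \<le> infdist z K'"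
    using continuous_attains_inf[OF K False] by blast
  moreover have "0 < infdist z0 K'" using z0(1) K' disj by (intro infdist_pos_not_in_closed) auto
  ultimately show ?thesis using that by blast
qed (use that[of 1] in simp)

lemma lipschitz_separating_function:
  fixes K K' :: "'a::metric_space set"
  assumes K: "compact K" and K': "closed K'" and disj: "K \<inter> K' = {}"
  obtains \<delta> and \<phi> :: "'a \<Rightarrow> real"
  where "0 < \<delta>" "1-lipschitz_on UNIV \<phi>" "\<And>z. z \<in> K \<Longrightarrow> \<phi> z = \<delta>" "\<And>z. z \<in> K' \<Longrightarrow> \<phi> z = 0"
proof (cases "K' = {}")
  case True
  have "1-lipschitz_on UNIV (\<lambda>_::'a. 1::real)"
    by (rule lipschitz_on_mono[OF lipschitz_on_constant]) auto
  then show ?thesis using that[of 1 "\<lambda>_. 1"] True by simp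
next
  case False
  obtain \<delta> where \<delta>: "0 < \<delta>" "\<And>z. z \<in> K \<Longrightarrow> \<delta> \<le> infdist z K'"
    using compact_infdist_ge[OF K K' False disj] by blast
  have "1-lipschitz_on UNIV (\<lambda>z. min \<delta> (infdist z K'))"
  proof (rule lipschitz_onI)
    fix x y :: 'a
    have "\<bar>min \<delta> (infdist x K') - min \<delta> (infdist y K')\<bar> \<le> \<bar>infdist x K' - infdist y K'\<bar>" by linarith
    also have "\<dots> \<le> dist x y" by (rule infdist_triangle_abs)
    finally show "dist (min \<delta> (infdist x K')) (min \<delta> (infdist y K')) \<le> 1 * dist x y"
      by (simp add: dist_real_def)
  qed simp
  moreover have "min \<delta> (infdist z K') = \<delta>" if "z \<in> K" for z using \<delta>(2)[OF that] by simp
  moreover have "min \<delta> (infdist z K') = 0" if "z \<in> K'" for z using \<delta>(1) that by simp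
  ultimately show ?thesis using that[of \<delta> "\<lambda>z. min \<delta> (infdist z K')"] \<delta>(1) by blast
qed

lemma inj_closed_curve_arcs_disjoint:
  fixes \<gamma> :: "real \<Rightarrow> 'a" and T a b c d :: real
  assumes inj: "inj_on \<gamma> {0..<T}" and closed: "\<gamma> 0 = \<gamma> T"
    and ab: "0 \<le> a" and bc: "b < c" and dT: "d \<le> T" and not_full: "0 < a \<or> d < T"
  shows "\<gamma> ` {a..b} \<inter> \<gamma> ` {c..d} = {}"
proof -
  have False if s: "s \<in> {a..b}" and t: "t \<in> {c..d}" and eq: "\<gamma> s = \<gamma> t" for s t
  proof (cases "t = T")
    case True
    then have "\<gamma> s = \<gamma> 0" using eq closed by simp
    moreover have "s \<in> {0..<T}" "0 \<in> {0..<T}" using s t ab bc dT True by auto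
    ultimately have "s = 0" using inj by (auto simp: inj_on_def)
    then show False using s t ab not_full dT True by auto
  next
    case False
    then have "s = t" using inj eq s t ab bc dT by (auto simp: inj_on_def)
    then show False using s t bc by auto
  qed
  then show ?thesis by blast
qed

lemma closed_curve_separating_function:
  fixes \<gamma> :: "real \<Rightarrow> 'a::metric_space" and T a b c d :: real
  assumes inj: "inj_on \<gamma> {0..<T}" and closed: "\<gamma> 0 = \<gamma> T" and cont: "continuous_on {0..T} \<gamma>"
    and "0 \<le> a" "a \<le> b" "b < c" "c \<le> d" "d \<le> T" "0 < a \<or> d < T"
  obtains \<delta> :: real and \<phi> :: "'a \<Rightarrow> real" where "0 < \<delta>" "1-lipschitz_on UNIV \<phi>"
    "\<And>t. t \<in> {a..b} \<Longrightarrow> \<phi> (\<gamma> t) = \<delta>" "\<And>t. t \<in> {c..d} \<Longrightarrow> \<phi> (\<gamma> t) = 0"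
proof -
  have "compact (\<gamma> ` {u..v})" if "0 \<le> u" "v \<le> T" for u v
    using that by (intro compact_continuous_image continuous_on_subset[OF cont]) auto
  then have "compact (\<gamma> ` {a..b})" "closed (\<gamma> ` {c..d})"
    using assms by (auto intro: compact_imp_closed)
  moreover have "\<gamma> ` {a..b} \<inter> \<gamma> ` {c..d} = {}"
    using assms by (intro inj_closed_curve_arcs_disjoint[OF inj closed])
  ultimately show ?thesis
    using lipschitz_separating_function that by (metis image_eqI)
qed

theorem lemma9:
  fixes \<gamma> :: "real \<Rightarrow> 'a::metric_space"
  assumes closed: "\<gamma> 0 = \<gamma> (2*pi)"
    and inj: "inj_on \<gamma> {0..<2*pi}"
    and lip: "\<exists>L. L-lipschitz_on {0..2*pi} \<gamma>"
  shows "\<exists>(\<pi> :: 'a \<Rightarrow> real \<times> real) L. L-lipschitz_on UNIV \<pi> \<and> signed_area (\<pi> \<circ> \<gamma>) \<noteq> 0"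
proof -
  obtain L where L: "L-lipschitz_on {0..2*pi} \<gamma>" using lip by blast
  note separate = closed_curve_separating_function[OF inj closed lipschitz_on_continuous_on[OF L]]
  obtain \<delta>1 :: real and \<phi>1 where \<phi>1: "0 < \<delta>1" "1-lipschitz_on UNIV \<phi>1"
    "\<And>t. t \<in> {0..pi/2} \<Longrightarrow> \<phi>1 (\<gamma> t) = \<delta>1" "\<And>t. t \<in> {pi..3*pi/2} \<Longrightarrow> \<phi>1 (\<gamma> t) = 0"
    by (rule separate[of 0 "pi/2" pi "3*pi/2"]) auto
  obtain \<delta>2 :: real and \<phi>2 where \<phi>2: "0 < \<delta>2" "1-lipschitz_on UNIV \<phi>2"
    "\<And>t. t \<in> {pi/2..pi} \<Longrightarrow> \<phi>2 (\<gamma> t) = \<delta>2" "\<And>t. t \<in> {3*pi/2..2*pi} \<Longrightarrow> \<phi>2 (\<gamma> t) = 0"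
    by (rule separate[of "pi/2" pi "3*pi/2" "2*pi"]) auto
  define \<pi> where "\<pi> z = (\<phi>1 z, \<phi>2 z)" for z
  have "(sqrt (1\<^sup>2 + 1\<^sup>2))-lipschitz_on UNIV \<pi>"
    unfolding \<pi>_def by (intro lipschitz_on_Pair \<phi>1(2) \<phi>2(2))
  moreover have "signed_area (\<pi> \<circ> \<gamma>) = \<delta>1 * \<delta>2"
    unfolding signed_area_def \<pi>_def o_def fst_conv snd_conv
  proof (rule integral_mult_deriv_plateaus[where b = "pi/2" and c = pi and d = "3*pi/2" and L = "1 * L"])
    show "\<phi>2 (\<gamma> 0) = 0" using \<phi>2(4)[of "2*pi"] closed by simp
    show "(1 * L)-lipschitz_on {0..pi/2} (\<lambda>t. \<phi>2 (\<gamma> t))"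
      using lipschitz_on_compose[OF lipschitz_on_subset[OF L] lipschitz_on_subset[OF \<phi>2(2)]]
      by (simp add: o_def)
  qed (use \<phi>1 \<phi>2 in auto)
  ultimately show ?thesis using \<phi>1(1) \<phi>2(1) by (metis mult_pos_pos less_irrefl)
qed

end
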